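(* Let $(b_j)$ be a wide-$(s)$ sequence in a Banach space $X$. Then there exist bounded sequences $(f_j)$ and $(g_j)$ in $X^*$ such that (i) $f_i(b_j)=1$ for all $j\ge i$ and $f_i(b_j)=0$ for all $j<i$; (ii) $g_j(b_i)=1$ for all $j\ge i$ and $g_j(b_i)=0$ for all $j<i$.
   Context: A semi-normalized sequence $(b_j)$ (i.e. $0<\inf_j\|b_j\|\le\sup_j\|b_j\|<\infty$) is wide-$(s)$ if it is a basic sequence such that $\sum_j c_j$ converges whenever $\sum_j c_jb_j$ converges. *)

theory Defs
  imports "HOL-Analysis.Analysis"
begin

definition semi_normalized :: "(nat \<Rightarrow> 'a::real_normed_vector) \<Rightarrow> bool" where
  "semi_normalized b \<longleftrightarrow> 0 < (INF j. norm (b j)) \<and> bdd_above (range (\<lambda>j. norm (b j)))"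

definition basic_sequence :: "(nat \<Rightarrow> 'a::real_normed_vector) \<Rightarrow> bool" where
  "basic_sequence b \<longleftrightarrow>
     (\<forall>x \<in> closure (span (range b)). \<exists>!c :: nat \<Rightarrow> real. (\<lambda>j. c j *\<^sub>R b j) sums x)"

definition wide_s :: "(nat \<Rightarrow> 'a::real_normed_vector) \<Rightarrow> bool" where
  "wide_s b \<longleftrightarrow> semi_normalized b \<and> basic_sequence b \<and>
     (\<forall>c :: nat \<Rightarrow> real. summable (\<lambda>j. c j *\<^sub>R b j) \<longrightarrow> summable c)"

end

theory Submission
  imports Defs
begin

text \<open>
  Let Y be the closed span of (b_j) and c(y) the coefficient sequence of y in Y. The functionals
  y |-> sum_{j<n} c_j(y) and, because (b_j) is wide-(s), y |-> sum_{j>=n} c_j(y) are linear on Y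
  and take the values [i < n] and [n <= i] at b_i; once they are bounded uniformly in n,
  Hahn--Banach extends them to X.
  The uniform bound is an open mapping argument for the synthesis map c |-> sum_j c_j b_j, with
  coefficient sequences normed by sup_n (||sum_{j<n} c_j b_j|| + |sum_{j<n} c_j|). By Baire
  category the image of some ball of coefficients is dense in a ball of Y; a geometric series of
  successive approximations then represents every y with coefficient norm at most M ||y||, the
  series of coefficients converging because this norm controls each single coefficient
  (b_j is nonzero).
\<close>

section \<open>Hahn--Banach extension\<close>

lemma subspace_Union_chain:
  assumes "\<C> \<noteq> {}" "\<And>S. S \<in> \<C> \<Longrightarrow> subspace S"
    and "\<And>S T. S \<in> \<C> \<Longrightarrow> T \<in> \<C> \<Longrightarrow> S \<subseteq> T \<or> T \<subseteq> S"
  shows "subspace (\<Union>\<C>)"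
  unfolding subspace_def
proof (intro conjI ballI allI)
  show "0 \<in> \<Union>\<C>" using assms(1,2) subspace_0 by blast
next
  fix x y assume "x \<in> \<Union>\<C>" "y \<in> \<Union>\<C>"
  then obtain S where "S \<in> \<C>" "x \<in> S" "y \<in> S" using assms(3) by blast
  then show "x + y \<in> \<Union>\<C>" using assms(2) subspace_add by blast
next
  fix c x assume "x \<in> \<Union>\<C>"
  then show "c *\<^sub>R x \<in> \<Union>\<C>" using assms(2) subspace_scale by blast
qed

definition dominated_graph :: "real \<Rightarrow> ('a::real_normed_vector \<times> real) set \<Rightarrow> bool" where
  "dominated_graph C G \<longleftrightarrow> subspace G \<and> (\<forall>(x, a) \<in> G. a \<le> C * norm x)"

lemma dominated_graph_unique:
  assumes "dominated_graph C G" "(x, a) \<in> G" "(x, a') \<in> G"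
  shows "a = a'"
proof -
  have G: "subspace G" "\<And>x a. (x, a) \<in> G \<Longrightarrow> a \<le> C * norm x"
    using assms(1) unfolding dominated_graph_def by auto
  have "(0, a - a') \<in> G" "(0, a' - a) \<in> G"
    using subspace_diff[OF G(1) assms(2,3)] subspace_diff[OF G(1) assms(3,2)] by simp_all
  from G(2)[OF this(1)] G(2)[OF this(2)] show ?thesis by simp
qed

lemma dominated_graph_extend:
  assumes "C \<ge> 0" and dom: "dominated_graph C G" and x0: "x0 \<notin> fst ` G"
  shows "\<exists>G'. dominated_graph C G' \<and> G \<subseteq> G' \<and> G' \<noteq> G"
proof -
  have G: "subspace G" and bound: "\<And>x a. (x, a) \<in> G \<Longrightarrow> a \<le> C * norm x"
    using dom unfolding dominated_graph_def by auto
  have sep: "a - C * norm (v - x0) \<le> C * norm (w + x0) - b"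
    if "(v, a) \<in> G" "(w, b) \<in> G" for v a w b
  proof -
    have "a + b \<le> C * norm (v + w)" using bound subspace_add[OF G that] by simp
    also have "\<dots> \<le> C * (norm (v - x0) + norm (w + x0))"
      using norm_triangle_ineq[of "v - x0" "w + x0"] \<open>C \<ge> 0\<close> by (simp add: mult_left_mono)
    finally show ?thesis by (simp add: algebra_simps)
  qed
  \<comment> \<open>By \<open>sep\<close> any value between the two sides may be assigned to \<open>x0\<close>; take the supremum.\<close>
  define \<alpha> where "\<alpha> = Sup {a - C * norm (v - x0) | v a. (v, a) \<in> G}"
  have "(0, 0) \<in> G" using subspace_0[OF G] by (simp add: zero_prod_def)
  then have lo: "a - C * norm (v - x0) \<le> \<alpha>" and hi: "\<alpha> \<le> C * norm (v + x0) - a"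
    if "(v, a) \<in> G" for v a
    unfolding \<alpha>_def using that sep by (auto intro!: cSup_upper cSup_least bdd_aboveI)
  have alpha_bound: "\<bar>a + \<alpha>\<bar> \<le> C * norm (v + x0)" if "(v, a) \<in> G" for v a
    using hi[OF that] lo[of "-v" "-a"] subspace_neg[OF G that]
    by (simp add: norm_minus_commute add.commute abs_le_iff)
  define G' where "G' = {p + q | p q. p \<in> G \<and> q \<in> span {(x0, \<alpha>)}}"
  have G': "subspace G'" unfolding G'_def by (intro subspace_sums G subspace_span)
  have "a \<le> C * norm x" if xa: "(x, a) \<in> G'" for x a
  proof -
    obtain v a' t where p: "(v, a') \<in> G" and x: "x = v + t *\<^sub>R x0" and a: "a = a' + t * \<alpha>"
      using xa unfolding G'_def span_singleton by auto
    show ?thesis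
    proof (cases "t = 0")
      case True then show ?thesis using bound[OF p] x a by simp
    next
      case False
      have "\<bar>a' / t + \<alpha>\<bar> \<le> C * norm (v /\<^sub>R t + x0)"
        using alpha_bound subspace_scale[OF G p, of "1 / t"] by (simp add: divide_inverse_commute)
      then have "\<bar>t\<bar> * \<bar>a' / t + \<alpha>\<bar> \<le> C * (\<bar>t\<bar> * norm (v /\<^sub>R t + x0))"
        using mult_left_mono[OF _ abs_ge_zero[of t]] by (metis mult.left_commute)
      also have "\<bar>t\<bar> * norm (v /\<^sub>R t + x0) = norm x"
        using False by (simp add: x flip: norm_scaleR) (simp add: algebra_simps)
      finally show ?thesis using False by (simp add: a abs_mult[symmetric] algebra_simps)
    qed
  qed
  then have "dominated_graph C G'" using G' unfolding dominated_graph_def by auto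
  moreover have "G \<subseteq> G'"
    unfolding G'_def using span_zero
    by (metis (mono_tags, lifting) add.right_neutral mem_Collect_eq subsetI)
  moreover have "(x0, \<alpha>) \<in> G'"
    unfolding G'_def using \<open>(0, 0) \<in> G\<close> span_base[of "(x0, \<alpha>)" "{(x0, \<alpha>)}"]
    by (metis (mono_tags, lifting) add_0 mem_Collect_eq singletonI zero_prod_def)
  ultimately show ?thesis using x0 by (metis fst_conv image_eqI)
qed

lemma dominated_graph_blinfun:
  assumes "C \<ge> 0" and dom: "dominated_graph C G" and total: "\<And>x. x \<in> fst ` G"
  shows "\<exists>F :: 'a::real_normed_vector \<Rightarrow>\<^sub>L real.
    norm F \<le> C \<and> (\<forall>(x, a) \<in> G. blinfun_apply F x = a)"
proof -
  have G: "subspace G" and bound: "\<And>x a. (x, a) \<in> G \<Longrightarrow> a \<le> C * norm x"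
    using dom unfolding dominated_graph_def by auto
  define F where "F x = (THE a. (x, a) \<in> G)" for x
  have FG: "(x, F x) \<in> G" for x
  proof -
    obtain a where a: "(x, a) \<in> G" using total[of x] by force
    then show ?thesis unfolding F_def by (rule theI) (use a dominated_graph_unique[OF dom] in blast)
  qed
  have F_eq: "F x = a" if "(x, a) \<in> G" for x a
    using dominated_graph_unique[OF dom that FG] by simp
  have F_add: "F (x + y) = F x + F y" for x y
    using F_eq subspace_add[OF G FG FG] by simp
  have F_scale: "F (r *\<^sub>R x) = r * F x" for r x
    using F_eq subspace_scale[OF G FG] by simp
  have F_bound: "\<bar>F x\<bar> \<le> C * norm x" for x
    using bound[OF FG, of x] bound[OF FG, of "-x"] F_scale[of "-1" x] by simp
  have F: "bounded_linear F"
    using F_add F_scale F_bound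
    by (intro bounded_linear_intro[where K = C]) (auto simp: mult.commute)
  have "norm (Blinfun F) \<le> C"
    using F_bound
    by (intro norm_blinfun_bound \<open>C \<ge> 0\<close>) (simp add: bounded_linear_Blinfun_apply[OF F])
  moreover have "\<forall>(x, a) \<in> G. blinfun_apply (Blinfun F) x = a"
    using F_eq by (auto simp: bounded_linear_Blinfun_apply[OF F])
  ultimately show ?thesis by blast
qed

theorem hahn_banach_extension:
  fixes \<phi> :: "'a::real_normed_vector \<Rightarrow> real"
  assumes "C \<ge> 0" and Y: "subspace Y"
    and add: "\<And>x y. x \<in> Y \<Longrightarrow> y \<in> Y \<Longrightarrow> \<phi> (x + y) = \<phi> x + \<phi> y"
    and scale: "\<And>r x. x \<in> Y \<Longrightarrow> \<phi> (r *\<^sub>R x) = r * \<phi> x"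
    and bound: "\<And>x. x \<in> Y \<Longrightarrow> \<phi> x \<le> C * norm x"
  shows "\<exists>F :: 'a \<Rightarrow>\<^sub>L real. norm F \<le> C \<and> (\<forall>x\<in>Y. blinfun_apply F x = \<phi> x)"
proof -
  define G0 where "G0 = (\<lambda>x. (x, \<phi> x)) ` Y"
  have "subspace G0"
    unfolding subspace_def G0_def
    using subspace_0[OF Y] subspace_add[OF Y] subspace_scale[OF Y] scale[of 0 0, OF subspace_0[OF Y]]
      add scale
    by (auto simp: zero_prod_def image_iff)
  then have G0: "dominated_graph C G0"
    unfolding dominated_graph_def G0_def using bound by auto
  define \<A> where "\<A> = {G. G0 \<subseteq> G \<and> dominated_graph C G}"
  have "\<exists>G\<in>\<A>. \<forall>X\<in>\<A>. G \<subseteq> X \<longrightarrow> X = G"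
  proof (rule subset_Zorn_nonempty)
    show "\<A> \<noteq> {}" using G0 unfolding \<A>_def by blast
    fix \<C> assume "\<C> \<noteq> {}" "subset.chain \<A> \<C>"
    then have "subspace (\<Union>\<C>)"
      by (intro subspace_Union_chain) (auto simp: subset_chain_def \<A>_def dominated_graph_def)
    then show "\<Union>\<C> \<in> \<A>"
      using \<open>\<C> \<noteq> {}\<close> \<open>subset.chain \<A> \<C>\<close>
      by (fastforce simp: subset_chain_def \<A>_def dominated_graph_def)
  qed
  then obtain G where "G \<in> \<A>" and max: "\<And>X. X \<in> \<A> \<Longrightarrow> G \<subseteq> X \<Longrightarrow> X = G"
    by blast
  then have G: "G0 \<subseteq> G" "dominated_graph C G" unfolding \<A>_def by auto
  have "x \<in> fst ` G" for x
  proof (rule ccontr)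
    assume "x \<notin> fst ` G"
    then obtain G' where "dominated_graph C G'" "G \<subseteq> G'" "G' \<noteq> G"
      using dominated_graph_extend[OF \<open>C \<ge> 0\<close> G(2)] by blast
    moreover have "G' \<in> \<A>" using G(1) calculation(1,2) unfolding \<A>_def by auto
    ultimately show False using max by blast
  qed
  then obtain F :: "'a \<Rightarrow>\<^sub>L real" where "norm F \<le> C" "\<forall>(x, a) \<in> G. blinfun_apply F x = a"
    using dominated_graph_blinfun[OF \<open>C \<ge> 0\<close> G(2)] by blast
  moreover have "(x, \<phi> x) \<in> G" if "x \<in> Y" for x using G(1) that unfolding G0_def by blast
  ultimately show ?thesis by (metis (mono_tags, lifting) case_prodD)
qed

lemma hahn_banach_family:
  fixes \<phi> :: "'i \<Rightarrow> 'a::real_normed_vector \<Rightarrow> real"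
  assumes Y: "subspace Y"
    and add: "\<And>i x y. x \<in> Y \<Longrightarrow> y \<in> Y \<Longrightarrow> \<phi> i (x + y) = \<phi> i x + \<phi> i y"
    and scale: "\<And>i r x. x \<in> Y \<Longrightarrow> \<phi> i (r *\<^sub>R x) = r * \<phi> i x"
    and bound: "\<And>i x. x \<in> Y \<Longrightarrow> \<bar>\<phi> i x\<bar> \<le> C * norm x"
  shows "\<exists>F :: 'i \<Rightarrow> 'a \<Rightarrow>\<^sub>L real.
    bounded (range F) \<and> (\<forall>i. \<forall>x\<in>Y. blinfun_apply (F i) x = \<phi> i x)"
proof -
  have "\<exists>F :: 'a \<Rightarrow>\<^sub>L real. norm F \<le> max C 0 \<and> (\<forall>x\<in>Y. blinfun_apply F x = \<phi> i x)" for i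
  proof (rule hahn_banach_extension[OF _ Y add scale])
    show "\<phi> i x \<le> max C 0 * norm x" if "x \<in> Y" for x
      using abs_le_D1[OF bound[OF that, of i]] mult_right_mono[OF max.cobounded1[of C 0] norm_ge_zero[of x]]
      by linarith
  qed simp
  then obtain F where "\<And>i. norm (F i) \<le> max C 0"
    and "\<And>i x. x \<in> Y \<Longrightarrow> blinfun_apply (F i) x = \<phi> i x"
    by metis
  then show ?thesis by (intro exI[of _ F]) (auto simp: bounded_iff)
qed

section \<open>Coordinates of a wide-(s) sequence\<close>

lemma subspace_closure:
  fixes S :: "'a::real_normed_vector set"
  assumes "subspace S"
  shows "subspace (closure S)"
proof -
  have "S + S \<subseteq> S" using assms by (auto simp: set_plus_def subspace_add)
  then have "closure S + closure S \<subseteq> closure S"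
    using closure_sum[of S S] closure_mono by blast
  moreover have "(*\<^sub>R) c ` closure S \<subseteq> closure S" for c
    using closure_mono[of "(*\<^sub>R) c ` S" S] assms
    by (auto simp: closure_scaleR subspace_scale image_subset_iff)
  ultimately show ?thesis
    using assms closure_subset subspace_0 unfolding subspace_def by (blast intro: set_plus_intro)
qed

locale wide_s_sequence =
  fixes b :: "nat \<Rightarrow> 'a::banach"
  assumes wide_s: "wide_s b"
begin

definition closed_span :: "'a set" where
  "closed_span = closure (span (range b))"

definition coord :: "'a \<Rightarrow> nat \<Rightarrow> real" where
  "coord y = (THE c. (\<lambda>j. c j *\<^sub>R b j) sums y)"

definition coef_norm_le :: "(nat \<Rightarrow> real) \<Rightarrow> real \<Rightarrow> bool" where
  "coef_norm_le c M \<longleftrightarrow> (\<forall>n. norm (\<Sum>j<n. c j *\<^sub>R b j) + \<bar>\<Sum>j<n. c j\<bar> \<le> M)"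

definition expansion_ball :: "real \<Rightarrow> 'a set" where
  "expansion_ball M = {\<Sum>j. c j *\<^sub>R b j | c. summable (\<lambda>j. c j *\<^sub>R b j) \<and> coef_norm_le c M}"

lemma b_nonzero: "b j \<noteq> 0"
proof -
  have "0 < (INF j. norm (b j))"
    using wide_s unfolding wide_s_def semi_normalized_def by blast
  also have "\<dots> \<le> norm (b j)" by (rule cINF_lower) (auto intro: bdd_belowI[of _ 0])
  finally show ?thesis by simp
qed

lemma subspace_closed_span: "subspace closed_span"
  unfolding closed_span_def by (intro subspace_closure subspace_span)

lemma b_in_closed_span: "b j \<in> closed_span"
  unfolding closed_span_def by (intro closure_subset[THEN subsetD] span_base rangeI)

lemma sums_in_closed_span: "(\<lambda>j. c j *\<^sub>R b j) sums y \<Longrightarrow> y \<in> closed_span"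
  unfolding closed_span_def sums_def closure_sequential
  by (intro exI[of _ "\<lambda>n. \<Sum>j<n. c j *\<^sub>R b j"] conjI allI
      span_sum span_scale span_base rangeI)

lemma unique_expansion: "y \<in> closed_span \<Longrightarrow> \<exists>!c. (\<lambda>j. c j *\<^sub>R b j) sums y"
  using wide_s unfolding wide_s_def basic_sequence_def closed_span_def by (elim conjE bspec)

lemma coord_sums: "y \<in> closed_span \<Longrightarrow> (\<lambda>j. coord y j *\<^sub>R b j) sums y"
  unfolding coord_def by (rule theI'[OF unique_expansion])

lemma coord_eqI: "(\<lambda>j. c j *\<^sub>R b j) sums y \<Longrightarrow> coord y = c"
  unfolding coord_def by (rule the1_equality[OF unique_expansion[OF sums_in_closed_span]])

lemma summable_coord: "y \<in> closed_span \<Longrightarrow> summable (coord y)"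
  using wide_s coord_sums unfolding wide_s_def by (blast dest: sums_summable)

lemma coord_add:
  "x \<in> closed_span \<Longrightarrow> y \<in> closed_span \<Longrightarrow> coord (x + y) = (\<lambda>j. coord x j + coord y j)"
  by (rule coord_eqI) (use sums_add[OF coord_sums coord_sums] in \<open>simp add: scaleR_add_left\<close>)

lemma coord_scale: "y \<in> closed_span \<Longrightarrow> coord (r *\<^sub>R y) = (\<lambda>j. r * coord y j)"
  by (rule coord_eqI) (use sums_scaleR_right[OF coord_sums, of y r] in simp)

lemma coord_b: "coord (b i) = (\<lambda>j. if j = i then 1 else 0)"
proof (rule coord_eqI)
  have "(\<lambda>j. (if j = i then 1 else 0) *\<^sub>R b j) = (\<lambda>j. if j = i then b j else 0)" by auto
  then show "(\<lambda>j. (if j = i then 1 else 0) *\<^sub>R b j) sums b i" using sums_single[of i b] by simp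
qed

lemma coef_norm_le_partial_sum: "coef_norm_le c M \<Longrightarrow> norm (\<Sum>j<n. c j *\<^sub>R b j) \<le> M"
  unfolding coef_norm_le_def by (smt (verit) abs_ge_zero)

lemma coef_norm_le_coef_sum: "coef_norm_le c M \<Longrightarrow> \<bar>\<Sum>j<n. c j\<bar> \<le> M"
  unfolding coef_norm_le_def by (smt (verit) norm_ge_zero)

lemma coef_norm_le_mono: "coef_norm_le c M \<Longrightarrow> M \<le> M' \<Longrightarrow> coef_norm_le c M'"
  unfolding coef_norm_le_def by (meson order_trans)

lemma coef_norm_le_zero: "coef_norm_le (\<lambda>_. 0) 0"
  unfolding coef_norm_le_def by simp

lemma coef_norm_le_diff: "coef_norm_le c M \<Longrightarrow> coef_norm_le d M' \<Longrightarrow> coef_norm_le (\<lambda>j. c j - d j) (M + M')"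
  unfolding coef_norm_le_def scaleR_diff_left sum_subtractf
  by (smt (verit) abs_triangle_ineq4 norm_triangle_ineq4)

lemma coef_norm_le_scale: "coef_norm_le c M \<Longrightarrow> coef_norm_le (\<lambda>j. r * c j) (\<bar>r\<bar> * M)"
  unfolding coef_norm_le_def
proof
  fix n assume "\<forall>n. norm (\<Sum>j<n. c j *\<^sub>R b j) + \<bar>\<Sum>j<n. c j\<bar> \<le> M"
  then have "\<bar>r\<bar> * (norm (\<Sum>j<n. c j *\<^sub>R b j) + \<bar>\<Sum>j<n. c j\<bar>) \<le> \<bar>r\<bar> * M"
    by (simp add: mult_left_mono)
  moreover have "(\<Sum>j<n. (r * c j) *\<^sub>R b j) = r *\<^sub>R (\<Sum>j<n. c j *\<^sub>R b j)"
    by (simp add: scaleR_sum_right)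
  ultimately show "norm (\<Sum>j<n. (r * c j) *\<^sub>R b j) + \<bar>\<Sum>j<n. r * c j\<bar> \<le> \<bar>r\<bar> * M"
    by (simp add: abs_mult distrib_left flip: sum_distrib_left)
qed

lemma coef_norm_le_coef: "coef_norm_le c M \<Longrightarrow> \<bar>c j\<bar> * norm (b j) \<le> 2 * M"
  using norm_triangle_ineq4[of "\<Sum>j<Suc j. c j *\<^sub>R b j" "\<Sum>j<j. c j *\<^sub>R b j"]
    coef_norm_le_partial_sum[of c M "Suc j"] coef_norm_le_partial_sum[of c M j]
  by simp

lemma coef_norm_le_exists: "summable (\<lambda>j. c j *\<^sub>R b j) \<Longrightarrow> \<exists>M. coef_norm_le c M"
proof -
  assume "summable (\<lambda>j. c j *\<^sub>R b j)"
  then have "Bseq (\<lambda>n. \<Sum>j<n. c j *\<^sub>R b j)" "Bseq (\<lambda>n. \<Sum>j<n. c j)"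
    using wide_s unfolding wide_s_def summable_iff_convergent by (auto intro: convergent_imp_Bseq)
  then obtain M1 M2 where "\<And>n. norm (\<Sum>j<n. c j *\<^sub>R b j) \<le> M1" "\<And>n. \<bar>\<Sum>j<n. c j\<bar> \<le> M2"
    unfolding Bseq_def by (metis real_norm_def less_imp_le)
  then have "coef_norm_le c (M1 + M2)" unfolding coef_norm_le_def by (simp add: add_mono)
  then show ?thesis by blast
qed

lemma norm_suminf_le_coef_norm:
  "summable (\<lambda>j. c j *\<^sub>R b j) \<Longrightarrow> coef_norm_le c M \<Longrightarrow> norm (\<Sum>j. c j *\<^sub>R b j) \<le> M"
  by (rule Lim_norm_ubound[OF _ summable_LIMSEQ])
    (auto intro!: always_eventually coef_norm_le_partial_sum)

lemma expansion_ball_diff: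
  assumes "x \<in> expansion_ball M" "y \<in> expansion_ball M'"
  shows "x - y \<in> expansion_ball (M + M')"
proof -
  obtain c d where c: "summable (\<lambda>j. c j *\<^sub>R b j)" "coef_norm_le c M" "x = (\<Sum>j. c j *\<^sub>R b j)"
    and d: "summable (\<lambda>j. d j *\<^sub>R b j)" "coef_norm_le d M'" "y = (\<Sum>j. d j *\<^sub>R b j)"
    using assms unfolding expansion_ball_def by blast
  have "(\<lambda>j. (c j - d j) *\<^sub>R b j) sums (x - y)"
    using sums_diff[OF c(1)[THEN summable_sums] d(1)[THEN summable_sums]] c(3) d(3)
    by (simp add: scaleR_diff_left)
  then show ?thesis
    unfolding expansion_ball_def using coef_norm_le_diff[OF c(2) d(2)]
    by (auto simp: sums_iff intro!: exI[of _ "\<lambda>j. c j - d j"])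
qed

lemma expansion_ball_scale:
  assumes "x \<in> expansion_ball M"
  shows "r *\<^sub>R x \<in> expansion_ball (\<bar>r\<bar> * M)"
proof -
  obtain c where c: "summable (\<lambda>j. c j *\<^sub>R b j)" "coef_norm_le c M" "x = (\<Sum>j. c j *\<^sub>R b j)"
    using assms unfolding expansion_ball_def by blast
  have "(\<lambda>j. (r * c j) *\<^sub>R b j) sums (r *\<^sub>R x)"
    using sums_scaleR_right[OF c(1)[THEN summable_sums], of r] c(3) by simp
  then show ?thesis
    unfolding expansion_ball_def using coef_norm_le_scale[OF c(2)]
    by (auto simp: sums_iff intro!: exI[of _ "\<lambda>j. r * c j"])
qed

lemma closure_expansion_ball_diff:
  assumes "x \<in> closure (expansion_ball M)" "y \<in> closure (expansion_ball M')"
  shows "x - y \<in> closure (expansion_ball (M + M'))"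
proof -
  obtain u v where "\<And>n. u n \<in> expansion_ball M" "u \<longlonglongrightarrow> x"
    and "\<And>n. v n \<in> expansion_ball M'" "v \<longlonglongrightarrow> y"
    using assms unfolding closure_sequential by metis
  then show ?thesis
    unfolding closure_sequential
    by (intro exI[of _ "\<lambda>n. u n - v n"]) (auto intro: expansion_ball_diff tendsto_diff)
qed

lemma closure_expansion_ball_scale:
  assumes "x \<in> closure (expansion_ball M)"
  shows "r *\<^sub>R x \<in> closure (expansion_ball (\<bar>r\<bar> * M))"
proof -
  have "r *\<^sub>R x \<in> closure ((*\<^sub>R) r ` expansion_ball M)"
    using imageI[OF assms, of "(*\<^sub>R) r"] by (simp flip: closure_scaleR)
  moreover have "(*\<^sub>R) r ` expansion_ball M \<subseteq> expansion_ball (\<bar>r\<bar> * M)"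
    using expansion_ball_scale by blast
  ultimately show ?thesis using closure_mono by blast
qed

lemma closed_span_subset_Union_closure_expansion_ball:
  "closed_span \<subseteq> (\<Union>k::nat. closure (expansion_ball (real k)))"
proof
  fix y assume y: "y \<in> closed_span"
  obtain M where "coef_norm_le (coord y) M"
    using coef_norm_le_exists sums_summable[OF coord_sums[OF y]] by blast
  moreover obtain k :: nat where "M \<le> real k" using real_arch_simple by blast
  ultimately have "y \<in> expansion_ball (real k)"
    unfolding expansion_ball_def using coord_sums[OF y] coef_norm_le_mono
    by (auto simp: sums_iff intro!: exI[of _ "coord y"])
  then show "y \<in> (\<Union>k. closure (expansion_ball (real k)))" using closure_subset by blast
qed

end

section \<open>The open mapping argument\<close>

lemma closed_countable_cover_contains_ball:
  fixes S :: "'a::{metric_space, complete_space} set"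
  assumes "closed S" "S \<noteq> {}" "S \<subseteq> (\<Union>k::nat. F k)" "\<And>k. closed (F k)"
  shows "\<exists>k. \<exists>y\<in>S. \<exists>r>0. S \<inter> ball y r \<subseteq> F k"
proof -
  let ?X = "top_of_set S"
  have "\<exists>k. ?X interior_of (S \<inter> F k) \<noteq> {}"
  proof (rule ccontr)
    assume "\<nexists>k. ?X interior_of (S \<inter> F k) \<noteq> {}"
    moreover have "completely_metrizable_space ?X"
      using assms(1) completely_metrizable_space_euclidean completely_metrizable_space_closedin
      unfolding closed_closedin by blast
    moreover have "closedin ?X (S \<inter> F k)" for k
      using assms(4) by (simp add: closedin_closed_Int)
    ultimately have "?X interior_of \<Union>(range (\<lambda>k. S \<inter> F k)) = {}"
      by (intro Baire_category_alt) auto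
    moreover have "\<Union>(range (\<lambda>k. S \<inter> F k)) = topspace ?X" using assms(3) by auto
    ultimately show False using assms(2) interior_of_topspace[of ?X] by simp
  qed
  then obtain k y where y: "y \<in> ?X interior_of (S \<inter> F k)" by blast
  moreover have "openin ?X (?X interior_of (S \<inter> F k))" by simp
  ultimately obtain r where "r > 0" "ball y r \<inter> S \<subseteq> ?X interior_of (S \<inter> F k)"
    unfolding openin_contains_ball by blast
  moreover have "y \<in> S" using y interior_of_subset by fastforce
  ultimately show ?thesis using interior_of_subset[of ?X "S \<inter> F k"] by blast
qed

context wide_s_sequence
begin

context
  fixes cm :: "nat \<Rightarrow> nat \<Rightarrow> real" and a :: "nat \<Rightarrow> real"
  assumes coef_norm_cm: "\<And>m. coef_norm_le (cm m) (a m)" and summable_a: "summable a"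
begin

lemma summable_coef_series: "summable (\<lambda>m. \<bar>cm m j\<bar>)"
proof (rule summable_comparison_test'[OF summable_mult[OF summable_a, of "2 / norm (b j)"]])
  fix m
  show "norm \<bar>cm m j\<bar> \<le> 2 / norm (b j) * a m"
    using coef_norm_le_coef[OF coef_norm_cm, of m j] b_nonzero[of j] by (simp add: field_simps)
qed

lemma partial_sums_suminf:
  "(\<Sum>j<n. (\<Sum>m. cm m j) *\<^sub>R b j) = (\<Sum>m. \<Sum>j<n. cm m j *\<^sub>R b j)"
  "(\<Sum>j<n. \<Sum>m. cm m j) = (\<Sum>m. \<Sum>j<n. cm m j)"
  using summable_coef_series
  by (auto simp: suminf_scaleR_left summable_rabs_cancel summable_scaleR_left
      intro!: suminf_sum[symmetric] sum.cong)

lemma summable_norm_partial_sums: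
  "summable (\<lambda>m. norm (\<Sum>j<n. cm m j *\<^sub>R b j))" "summable (\<lambda>m. \<bar>\<Sum>j<n. cm m j\<bar>)"
  by (auto intro!: summable_comparison_test'[OF summable_a]
      coef_norm_le_partial_sum coef_norm_le_coef_sum coef_norm_cm)

lemma coef_norm_le_suminf: "coef_norm_le (\<lambda>j. \<Sum>m. cm m j) (\<Sum>m. a m)"
  unfolding coef_norm_le_def partial_sums_suminf
proof
  fix n
  have "norm (\<Sum>m. \<Sum>j<n. cm m j *\<^sub>R b j) + \<bar>\<Sum>m. \<Sum>j<n. cm m j\<bar>
      \<le> (\<Sum>m. norm (\<Sum>j<n. cm m j *\<^sub>R b j)) + (\<Sum>m. \<bar>\<Sum>j<n. cm m j\<bar>)"
    using summable_norm[OF summable_norm_partial_sums(1)]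
      summable_norm[of "\<lambda>m. \<Sum>j<n. cm m j"] summable_norm_partial_sums(2) by (auto intro: add_mono)
  also have "\<dots> = (\<Sum>m. norm (\<Sum>j<n. cm m j *\<^sub>R b j) + \<bar>\<Sum>j<n. cm m j\<bar>)"
    by (rule suminf_add[OF summable_norm_partial_sums])
  also have "\<dots> \<le> (\<Sum>m. a m)"
    using coef_norm_cm summable_add[OF summable_norm_partial_sums] summable_a
    by (intro suminf_le) (auto simp: coef_norm_le_def)
  finally show "norm (\<Sum>m. \<Sum>j<n. cm m j *\<^sub>R b j) + \<bar>\<Sum>m. \<Sum>j<n. cm m j\<bar> \<le> (\<Sum>m. a m)" .
qed

lemma sums_expansion_suminf:
  assumes summable_cm: "\<And>m. summable (\<lambda>j. cm m j *\<^sub>R b j)"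
    and sums_y: "(\<lambda>m. \<Sum>j. cm m j *\<^sub>R b j) sums y"
  shows "(\<lambda>j. (\<Sum>m. cm m j) *\<^sub>R b j) sums y"
proof -
  define d where "d m n = (\<Sum>j<n. cm m j *\<^sub>R b j) - (\<Sum>j. cm m j *\<^sub>R b j)" for m n
  have d_bound: "norm (d m n) \<le> 2 * a m" for m n
    using norm_triangle_ineq4[of "\<Sum>j<n. cm m j *\<^sub>R b j" "\<Sum>j. cm m j *\<^sub>R b j"]
      coef_norm_le_partial_sum[OF coef_norm_cm[of m], of n]
      norm_suminf_le_coef_norm[OF summable_cm coef_norm_cm[of m]]
    unfolding d_def by linarith
  have summable_norm_d: "summable (\<lambda>m. norm (d m n))" for n
    using d_bound by (intro summable_comparison_test'[OF summable_mult[OF summable_a]]) auto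
  \<comment> \<open>The domination by \<open>2 * a m\<close> lets the limit in \<open>n\<close> pass through the sum over \<open>m\<close>.\<close>
  have lim: "(\<lambda>n. \<Sum>m. norm (d m n)) \<longlonglongrightarrow> (\<Sum>m. 0)"
  proof (rule tannerys_theorem[THEN conjunct2, THEN conjunct2])
    show "(\<lambda>n. norm (d m n)) \<longlonglongrightarrow> 0" for m
      unfolding d_def using summable_LIMSEQ[OF summable_cm[of m]]
      by (intro tendsto_norm_zero LIM_zero)
    show "\<forall>\<^sub>F (m, n) in at_top \<times>\<^sub>F sequentially. norm (norm (d m n)) \<le> 2 * a m"
      by (intro always_eventually) (simp add: d_bound split_def)
    show "summable (\<lambda>m. 2 * a m)" by (rule summable_mult[OF summable_a])
  qed simp
  have "\<forall>n. norm (\<Sum>m. d m n) \<le> (\<Sum>m. norm (d m n))"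
    using summable_norm[OF summable_norm_d] by blast
  from this lim have "(\<lambda>n. \<Sum>m. d m n) \<longlonglongrightarrow> 0"
    unfolding suminf_zero by (rule Lim_null_comparison[OF always_eventually])
  moreover have "(\<Sum>m. d m n) = (\<Sum>j<n. (\<Sum>m. cm m j) *\<^sub>R b j) - y" for n
  proof -
    have "(\<Sum>m. d m n) = (\<Sum>m. \<Sum>j<n. cm m j *\<^sub>R b j) - (\<Sum>m. \<Sum>j. cm m j *\<^sub>R b j)"
      unfolding d_def
      using summable_norm_cancel[OF summable_norm_partial_sums(1)] sums_summable[OF sums_y]
      by (rule suminf_diff[symmetric])
    then show ?thesis using sums_unique[OF sums_y] by (simp add: partial_sums_suminf)
  qed
  ultimately show ?thesis unfolding sums_def by (simp add: LIM_zero_iff)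
qed

end

lemma zero_in_expansion_ball: "0 \<in> expansion_ball 0"
  unfolding expansion_ball_def using coef_norm_le_zero by (auto intro!: exI[of _ "\<lambda>_. 0"])

lemma small_vectors_in_closure_expansion_ball:
  "\<exists>M\<ge>0. \<exists>r>0. \<forall>y\<in>closed_span. norm y < r \<longrightarrow> y \<in> closure (expansion_ball M)"
proof -
  have "closed closed_span" "closed_span \<noteq> {}"
    using subspace_0[OF subspace_closed_span] unfolding closed_span_def by auto
  then obtain k y0 r where y0: "y0 \<in> closed_span" and "r > 0"
    and ball: "closed_span \<inter> ball y0 r \<subseteq> closure (expansion_ball (real k))"
    using closed_countable_cover_contains_ball[OF _ _ closed_span_subset_Union_closure_expansion_ball]
    by blast
  have "y \<in> closure (expansion_ball (real k + real k))" if "y \<in> closed_span" "norm y < r" for y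
  proof -
    have "y0 + y \<in> closed_span \<inter> ball y0 r" "y0 \<in> closed_span \<inter> ball y0 r"
      using that y0 \<open>r > 0\<close> subspace_add[OF subspace_closed_span] by (auto simp: dist_norm)
    then show ?thesis using closure_expansion_ball_diff[of "y0 + y" _ y0] ball by force
  qed
  then show ?thesis using \<open>r > 0\<close> by (intro exI[of _ "real k + real k"]) auto
qed

lemma closed_span_subset_closure_expansion_ball:
  "\<exists>K\<ge>0. \<forall>y\<in>closed_span. y \<in> closure (expansion_ball (K * norm y))"
proof -
  obtain M r where "M \<ge> 0" "r > 0"
    and small: "\<And>y. y \<in> closed_span \<Longrightarrow> norm y < r \<Longrightarrow> y \<in> closure (expansion_ball M)"
    using small_vectors_in_closure_expansion_ball by blast
  have "y \<in> closure (expansion_ball (2 * M / r * norm y))" if y: "y \<in> closed_span" for y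
  proof (cases "y = 0")
    case True
    then show ?thesis using zero_in_expansion_ball closure_subset by auto
  next
    case False
    define s where "s = r / (2 * norm y)"
    have "s > 0" using \<open>r > 0\<close> False by (simp add: s_def)
    have "s *\<^sub>R y \<in> closure (expansion_ball M)"
      using small subspace_scale[OF subspace_closed_span y] \<open>r > 0\<close> False by (simp add: s_def)
    from closure_expansion_ball_scale[OF this, of "1 / s"]
    show ?thesis using \<open>s > 0\<close> False by (simp add: s_def field_simps)
  qed
  then show ?thesis using \<open>M \<ge> 0\<close> \<open>r > 0\<close> by (intro exI[of _ "2 * M / r"]) auto
qed

lemma geometric_expansion_series:
  assumes "K \<ge> 0" and y: "y \<in> closed_span"
    and approx: "\<And>z \<epsilon>. z \<in> closed_span \<Longrightarrow> \<epsilon> > 0 \<Longrightarrow>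
      \<exists>c. summable (\<lambda>j. c j *\<^sub>R b j) \<and> coef_norm_le c (K * norm z) \<and>
        norm (z - (\<Sum>j. c j *\<^sub>R b j)) < \<epsilon>"
  obtains cm where "\<And>m. summable (\<lambda>j. cm m j *\<^sub>R b j)"
    and "\<And>m. coef_norm_le (cm m) (K * norm y * (1/2)^m)" and "(\<lambda>m. \<Sum>j. cm m j *\<^sub>R b j) sums y"
proof (cases "y = 0")
  case True
  then show ?thesis using coef_norm_le_zero by (intro that[of "\<lambda>_ _. 0"]) auto
next
  case False
  define good where "good m z c \<longleftrightarrow> summable (\<lambda>j. c j *\<^sub>R b j) \<and> coef_norm_le c (K * norm z) \<and>
      norm (z - (\<Sum>j. c j *\<^sub>R b j)) < norm y * (1/2)^Suc m" for m z c
  define pick where "pick m z = (SOME c. good m z c)" for m z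
  have pick: "good m z (pick m z)" if "z \<in> closed_span" for m z
    unfolding pick_def
    by (rule someI_ex[of "good m z"]) (unfold good_def, rule approx[OF that], use False in simp)
  define r where "r = rec_nat y (\<lambda>m z. z - (\<Sum>j. pick m z j *\<^sub>R b j))"
  define cm where "cm m = pick m (r m)" for m
  have r_simps: "r 0 = y" "r (Suc m) = r m - (\<Sum>j. cm m j *\<^sub>R b j)" for m
    unfolding r_def cm_def by simp_all
  have r: "r m \<in> closed_span \<and> norm (r m) \<le> norm y * (1/2)^m" for m
  proof (induction m)
    case (Suc m)
    then show ?case
      using pick[of "r m" m] subspace_diff[OF subspace_closed_span] sums_in_closed_span[OF summable_sums]
      unfolding r_simps cm_def good_def by fastforce
  qed (simp add: r_simps y)
  have "summable (\<lambda>j. cm m j *\<^sub>R b j)" "coef_norm_le (cm m) (K * norm y * (1/2)^m)" for m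
  proof -
    have "good m (r m) (cm m)" using pick r unfolding cm_def by blast
    moreover have "K * norm (r m) \<le> K * norm y * (1/2)^m"
      using mult_left_mono[OF r[THEN conjunct2] \<open>K \<ge> 0\<close>] by (simp add: mult.assoc)
    ultimately show "summable (\<lambda>j. cm m j *\<^sub>R b j)" "coef_norm_le (cm m) (K * norm y * (1/2)^m)"
      unfolding good_def using coef_norm_le_mono by blast+
  qed
  moreover have "(\<Sum>m<n. \<Sum>j. cm m j *\<^sub>R b j) = y - r n" for n
    by (induction n) (simp_all add: r_simps)
  moreover have "r \<longlonglongrightarrow> 0"
  proof (rule Lim_null_comparison[OF always_eventually])
    show "\<forall>m. norm (r m) \<le> norm y * (1/2)^m" using r by blast
    show "(\<lambda>m. norm y * (1/2::real)^m) \<longlonglongrightarrow> 0"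
      by (intro tendsto_mult_right_zero LIMSEQ_power_zero) simp
  qed
  then have "(\<lambda>n. y - r n) \<longlonglongrightarrow> y" by (auto intro: tendsto_diff[THEN tendsto_eq_rhs])
  ultimately show ?thesis by (intro that) (auto simp: sums_def)
qed

lemma coord_coef_norm_bound: "\<exists>M\<ge>0. \<forall>y\<in>closed_span. coef_norm_le (coord y) (M * norm y)"
proof -
  obtain K where "K \<ge> 0"
    and approx: "\<And>y. y \<in> closed_span \<Longrightarrow> y \<in> closure (expansion_ball (K * norm y))"
    using closed_span_subset_closure_expansion_ball by blast
  have "coef_norm_le (coord y) (2 * K * norm y)" if y: "y \<in> closed_span" for y
  proof -
    have "\<exists>c. summable (\<lambda>j. c j *\<^sub>R b j) \<and> coef_norm_le c (K * norm z) \<and>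
        norm (z - (\<Sum>j. c j *\<^sub>R b j)) < \<epsilon>" if "z \<in> closed_span" "\<epsilon> > 0" for z \<epsilon>
      using approx[OF that(1)] that(2)
      unfolding closure_approachable expansion_ball_def by (force simp: dist_norm norm_minus_commute)
    then obtain cm where summable_cm: "\<And>m. summable (\<lambda>j. cm m j *\<^sub>R b j)"
      and coef_norm_cm: "\<And>m. coef_norm_le (cm m) (K * norm y * (1/2)^m)"
      and sums_y: "(\<lambda>m. \<Sum>j. cm m j *\<^sub>R b j) sums y"
      using geometric_expansion_series[OF \<open>K \<ge> 0\<close> y] by blast
    have geometric: "(\<lambda>m. K * norm y * (1/2)^m) sums (2 * K * norm y)"
      using sums_mult[OF geometric_sums[of "1/2::real"], of "K * norm y"] by (simp add: mult_ac)
    have "coord y = (\<lambda>j. \<Sum>m. cm m j)"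
      using sums_expansion_suminf[OF coef_norm_cm sums_summable[OF geometric] summable_cm sums_y]
      by (rule coord_eqI)
    then show ?thesis
      using coef_norm_le_suminf[OF coef_norm_cm sums_summable[OF geometric]] sums_unique[OF geometric] by simp
  qed
  then show ?thesis using \<open>K \<ge> 0\<close> by (intro exI[of _ "2 * K"]) auto
qed

lemma coord_sum_bounds:
  obtains M where "\<And>y n. y \<in> closed_span \<Longrightarrow>
    \<bar>\<Sum>j<n. coord y j\<bar> \<le> M * norm y \<and> \<bar>\<Sum>j. coord y (j + n)\<bar> \<le> M * norm y"
proof -
  obtain M where "M \<ge> 0"
    and partial: "\<And>y n. y \<in> closed_span \<Longrightarrow> \<bar>\<Sum>j<n. coord y j\<bar> \<le> M * norm y"
    using coord_coef_norm_bound coef_norm_le_coef_sum by blast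
  have total: "\<bar>\<Sum>j. coord y j\<bar> \<le> M * norm y" if "y \<in> closed_span" for y
    using Lim_norm_ubound[OF _ summable_LIMSEQ[OF summable_coord[OF that]]] partial[OF that] by auto
  have "\<bar>\<Sum>j<n. coord y j\<bar> \<le> 2 * M * norm y \<and> \<bar>\<Sum>j. coord y (j + n)\<bar> \<le> 2 * M * norm y"
    if "y \<in> closed_span" for y n
    using partial[OF that, of n] total[OF that]
      suminf_minus_initial_segment[OF summable_coord[OF that], of n] mult_right_mono[OF _ norm_ge_zero, of M "2 * M" y] \<open>M \<ge> 0\<close>
    by linarith
  then show ?thesis by (rule that)
qed

lemma coord_partial_sum_functionals:
  "\<exists>g :: nat \<Rightarrow> 'a \<Rightarrow>\<^sub>L real. bounded (range g) \<and>
     (\<forall>n. \<forall>y\<in>closed_span. blinfun_apply (g n) y = (\<Sum>j<n. coord y j))"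
proof -
  obtain M where M: "\<And>y n. y \<in> closed_span \<Longrightarrow>
      \<bar>\<Sum>j<n. coord y j\<bar> \<le> M * norm y \<and> \<bar>\<Sum>j. coord y (j + n)\<bar> \<le> M * norm y"
    using coord_sum_bounds by metis
  show ?thesis
  proof (rule hahn_banach_family[OF subspace_closed_span _ _ M[THEN conjunct1]])
    show "(\<Sum>j<n. coord (x + y) j) = (\<Sum>j<n. coord x j) + (\<Sum>j<n. coord y j)"
      if "x \<in> closed_span" "y \<in> closed_span" for n x y
      by (simp add: coord_add[OF that] sum.distrib)
    show "(\<Sum>j<n. coord (r *\<^sub>R x) j) = r * (\<Sum>j<n. coord x j)" if "x \<in> closed_span" for n r x
      by (simp add: coord_scale[OF that] sum_distrib_left)
  qed
qed

lemma coord_tail_sum_functionals: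
  "\<exists>f :: nat \<Rightarrow> 'a \<Rightarrow>\<^sub>L real. bounded (range f) \<and>
     (\<forall>n. \<forall>y\<in>closed_span. blinfun_apply (f n) y = (\<Sum>j. coord y (j + n)))"
proof -
  obtain M where M: "\<And>y n. y \<in> closed_span \<Longrightarrow>
      \<bar>\<Sum>j<n. coord y j\<bar> \<le> M * norm y \<and> \<bar>\<Sum>j. coord y (j + n)\<bar> \<le> M * norm y"
    using coord_sum_bounds by metis
  show ?thesis
  proof (rule hahn_banach_family[OF subspace_closed_span _ _ M[THEN conjunct2]])
    show "(\<Sum>j. coord (x + y) (j + n)) = (\<Sum>j. coord x (j + n)) + (\<Sum>j. coord y (j + n))"
      if "x \<in> closed_span" "y \<in> closed_span" for n x y
      using summable_coord[OF that(1)] summable_coord[OF that(2)]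
      by (simp add: coord_add[OF that] suminf_add summable_ignore_initial_segment)
    show "(\<Sum>j. coord (r *\<^sub>R x) (j + n)) = r * (\<Sum>j. coord x (j + n))" if "x \<in> closed_span" for n r x
      using summable_coord[OF that]
      by (simp add: coord_scale[OF that] suminf_mult summable_ignore_initial_segment)
  qed
qed

lemma partial_sum_coord_b: "(\<Sum>j<n. coord (b i) j) = (if i < n then 1 else 0)"
  by (simp add: coord_b)

lemma tail_sum_coord_b: "(\<Sum>j. coord (b i) (j + n)) = (if n \<le> i then 1 else 0)"
proof -
  have "(\<Sum>j. coord (b i) (j + n)) = (\<Sum>j. coord (b i) j) - (\<Sum>j<n. coord (b i) j)"
    by (rule suminf_minus_initial_segment[OF summable_coord[OF b_in_closed_span]])
  moreover have "(\<Sum>j. coord (b i) j) = 1"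
    using sums_unique[OF sums_single[of i "\<lambda>_. 1::real"]] by (simp add: coord_b)
  ultimately show ?thesis by (simp add: partial_sum_coord_b)
qed

end

theorem proposition9:
  fixes b :: "nat \<Rightarrow> 'a::banach"
  assumes "wide_s b"
  shows "\<exists>(f :: nat \<Rightarrow> ('a \<Rightarrow>\<^sub>L real)) (g :: nat \<Rightarrow> ('a \<Rightarrow>\<^sub>L real)).
           bounded (range f) \<and> bounded (range g) \<and>
           (\<forall>i j. blinfun_apply (f i) (b j) = (if j \<ge> i then 1 else 0)) \<and>
           (\<forall>i j. blinfun_apply (g j) (b i) = (if j \<ge> i then 1 else 0))"
proof -
  interpret wide_s_sequence b by standard (rule assms)
  obtain f :: "nat \<Rightarrow> 'a \<Rightarrow>\<^sub>L real" where "bounded (range f)"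
    and f: "\<And>i y. y \<in> closed_span \<Longrightarrow> blinfun_apply (f i) y = (\<Sum>k. coord y (k + i))"
    using coord_tail_sum_functionals by blast
  obtain g :: "nat \<Rightarrow> 'a \<Rightarrow>\<^sub>L real" where "bounded (range g)"
    and g: "\<And>n y. y \<in> closed_span \<Longrightarrow> blinfun_apply (g n) y = (\<Sum>k<n. coord y k)"
    using coord_partial_sum_functionals by blast
  have "bounded (range (\<lambda>j. g (Suc j)))"
    using \<open>bounded (range g)\<close> by (rule bounded_subset) auto
  moreover have "blinfun_apply (f i) (b j) = (if j \<ge> i then 1 else 0)" for i j
    using f[OF b_in_closed_span] tail_sum_coord_b by simp
  moreover have "blinfun_apply (g (Suc j)) (b i) = (if j \<ge> i then 1 else 0)" for i j
    using g[OF b_in_closed_span] partial_sum_coord_b by simp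
  ultimately show ?thesis using \<open>bounded (range f)\<close> by blast
qed

end
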